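(* Fix integers $t\ge 1$, $C_1,\dots,C_t\ge 1$, and $A_1,\dots,A_t$ with $0\le A_i\le C_i/2$ for all $i$. Let $S$ be the multiset of positive integers defined as follows: for each $i=1,\dots,t$, $S$ contains one copy of each positive integer congruent to $A_i$ modulo $C_i$ and, separately, one copy of each positive integer congruent to $-A_i$ modulo $C_i$, all these copies being regarded as distinct elements. (In particular, if $A_i\equiv -A_i \pmod{C_i}$, i.e. $A_i=0$ or $A_i=C_i/2$, that residue class contributes two distinct copies of each of its positive elements.) Let $D_S(N)$ be the number of partitions of $N$ into distinct elements of $S$, where, if no $A_i$ equals $0$, only partitions with an odd number of parts are counted. Let $r=\max(z,1)-1$, where $z$ is the number of indices $i$ with $A_i=0$. Then for every integer $N\ge 1$, $2^{r}\cdot D_S(N)$ equals the number of tuples $(\nu_1,\dots,\nu_t;d_1,\dots,d_t)$ with $\nu_i\in P$ and $d_i\in\mathbb Z$ for all $i$, $\sum_{i=1}^t d_i$ odd, and $$\sum_{i=1}^{t}C_i|\nu_i|+\sum_{i=1}^{t}C_i\binom{d_i}{2}+\sum_{i=1}^{t}A_i d_i=N.$$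
   Context: $P$ denotes the set of all integer partitions into positive parts (including the empty partition $\emptyset$, the unique partition of $0$); for a partition $\lambda$, $|\lambda|$ is the sum of its parts. For $d\in\mathbb Z$, $\binom{d}{2}=d(d-1)/2$. A partition of $N$ into distinct elements of a multiset $S$ is a finite set of distinct elements of $S$ (distinct copies of the same integer count as distinct elements) whose values sum to $N$. *)

theory Defs
  imports "HOL-Library.Multiset" "HOL-Library.FuncSet" "HOL-Number_Theory.Cong"
begin

definition Ptns :: "nat multiset set" where
  "Ptns = {\<nu>. \<forall>x\<in>#\<nu>. 0 < x}"

definition psize :: "nat multiset \<Rightarrow> nat" where
  "psize \<nu> = sum_mset \<nu>"

definition binom2 :: "int \<Rightarrow> int" where
  "binom2 d = d * (d - 1) div 2"

text \<open>Elements of the multiset S, labelled as (i, sign, value): for index i < t,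
  sign True means the copy from the class A_i mod C_i, sign False the copy from
  the class -A_i mod C_i. Distinct labels are distinct elements.\<close>
definition S_elems :: "nat \<Rightarrow> (nat \<Rightarrow> int) \<Rightarrow> (nat \<Rightarrow> int) \<Rightarrow> (nat \<times> bool \<times> int) set" where
  "S_elems t C A = {(i, s, m). i < t \<and> 0 < m \<and>
      (if s then [m = A i] (mod C i) else [m = - A i] (mod C i))}"

definition D_S :: "nat \<Rightarrow> (nat \<Rightarrow> int) \<Rightarrow> (nat \<Rightarrow> int) \<Rightarrow> int \<Rightarrow> nat" where
  "D_S t C A N = card {X. finite X \<and> X \<subseteq> S_elems t C A \<and>
      (\<Sum>(i, s, m)\<in>X. m) = N \<and>
      ((\<forall>i<t. A i \<noteq> 0) \<longrightarrow> odd (card X))}"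

end

theory Submission
  imports Defs
begin

(* Proof of the counting identity via Maya diagrams (a fermionic form of the
   Jacobi triple product).

   A Maya diagram is a set M of integers containing all sufficiently small and
   no sufficiently large integers.  Its particles are its nonnegative elements,
   its holes the negative non-elements; charge = #particles - #holes and
   energy = sum of particle positions + sum of |hole positions|.

   1. Pairs (partition nu, integer d) correspond bijectively to Maya diagrams,
      with charge d and energy binom2 d + |nu| (bij_diagram_of).  Lifting this
      pointwise to t-tuples turns the right-hand side into a count of t-tuples
      of Maya diagrams of odd total charge and total weight
      sum_i C_i energy + A_i charge = N (count_via_diagrams).
   2. A tuple of Maya diagrams is encoded by the set of elements of S that it
      "occupies": a particle at x >= 0 of diagram i gives the copy A_i + C_i x
      of the class A_i, a hole at h < 0 the copy -A_i - C_i h of the class -A_i.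
      The only particles without a positive image are those at 0 with A_i = 0;
      they are remembered as a set F of flagged indices.  This is a bijection
      onto pairs (U, F) with U a finite subset of S; it turns weight into the
      sum of U and total charge into the parity of |U| + |F|
      (count_via_subsets).
   3. For a fixed U, exactly half of the 2^z flag sets F give |U| + |F| odd when
      z > 0; when z = 0 only U of odd size are admitted (count_flagged_partitions). *)

definition particles :: "int set \<Rightarrow> int set" where
  "particles M = {x \<in> M. 0 \<le> x}"

definition holes :: "int set \<Rightarrow> int set" where
  "holes M = {h. h < 0 \<and> h \<notin> M}"

definition maya :: "int set \<Rightarrow> bool" where
  "maya M \<longleftrightarrow> (\<exists>lo hi. {..<lo} \<subseteq> M \<and> M \<subseteq> {..<hi})"

definition charge :: "int set \<Rightarrow> int" where
  "charge M = int (card (particles M)) - int (card (holes M))"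

definition energy :: "int set \<Rightarrow> int" where
  "energy M = (\<Sum>x\<in>particles M. x) + (\<Sum>h\<in>holes M. - h)"

lemma maya_finite:
  assumes "maya M"
  shows "finite (particles M)" "finite (holes M)"
proof -
  obtain lo hi where "{..<lo} \<subseteq> M" "M \<subseteq> {..<hi}" using assms maya_def by blast
  then have "particles M \<subseteq> {0..<hi}" "holes M \<subseteq> {lo..<0}"
    unfolding particles_def holes_def by force+
  then show "finite (particles M)" "finite (holes M)" using finite_subset by blast+
qed

lemma maya_insert:
  assumes M: "maya M" and x: "x \<notin> M"
  shows "maya (insert x M)" "charge (insert x M) = charge M + 1"
    "energy (insert x M) = energy M + x"
proof -
  obtain lo hi where h: "{..<lo} \<subseteq> M" "M \<subseteq> {..<hi}" using M maya_def by blast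
  then have "{..<lo} \<subseteq> insert x M" "insert x M \<subseteq> {..<max hi (x + 1)}" by auto
  then show "maya (insert x M)" unfolding maya_def by blast
  note fin = maya_finite[OF M]
  have "charge (insert x M) = charge M + 1 \<and> energy (insert x M) = energy M + x"
  proof (cases "0 \<le> x")
    case True
    then have "particles (insert x M) = insert x (particles M)" "holes (insert x M) = holes M"
      "x \<notin> particles M"
      using x unfolding particles_def holes_def by auto
    then show ?thesis unfolding charge_def energy_def using fin by simp
  next
    case False
    then have "particles (insert x M) = particles M" "holes M = insert x (holes (insert x M))"
      "x \<notin> holes (insert x M)"
      using x unfolding particles_def holes_def by auto
    then show ?thesis unfolding charge_def energy_def using fin by simp
  qed
  then show "charge (insert x M) = charge M + 1" "energy (insert x M) = energy M + x" by auto
qed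

lemma binom2_eq: "2 * binom2 d = d * (d - 1)"
  unfolding binom2_def by simp

lemma binom2_succ: "binom2 (d + 1) = binom2 d + d"
  using binom2_eq[of d] binom2_eq[of "d + 1"] by (simp add: algebra_simps)

lemma downset_maya: "maya {..<k}"
  unfolding maya_def by blast

lemma downset_charge_energy: "charge {..<k} = k \<and> energy {..<k} = binom2 k"
proof (induction k rule: int_induct[of _ 0])
  case base
  have "particles {..<0} = {}" "holes {..<0::int} = {}" unfolding particles_def holes_def by auto
  then show ?case unfolding charge_def energy_def binom2_def by simp
next
  case (step1 k)
  have "{..<k + 1} = insert k {..<k}" by auto
  then show ?case using step1 maya_insert[OF downset_maya, of k k] binom2_succ[of k] by simp
next
  case (step2 k)
  have "{..<k} = insert (k - 1) {..<k - 1}" by auto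
  then show ?case
    using step2 maya_insert[OF downset_maya, of "k - 1" "k - 1"] binom2_succ[of "k - 1"] by simp
qed

text \<open>The Maya diagram of charge \<open>d\<close> of a partition \<open>p\<^sub>1 \<ge> p\<^sub>2 \<ge> \<dots>\<close>: the points
  \<open>p\<^sub>k + d - k\<close> together with everything below \<open>d - (number of parts)\<close>.\<close>
fun diagram :: "int \<Rightarrow> nat list \<Rightarrow> int set" where
  "diagram d [] = {..<d}"
| "diagram d (p # ps) = insert (int p + d - 1) (diagram (d - 1) ps)"

definition partition_list :: "nat list \<Rightarrow> bool" where
  "partition_list ps \<longleftrightarrow> sorted_wrt (\<ge>) ps \<and> (\<forall>p\<in>set ps. 0 < p)"

fun largest_part :: "nat list \<Rightarrow> nat" where
  "largest_part [] = 0"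
| "largest_part (p # _) = p"

lemma partition_list_Cons:
  "partition_list (p # ps) \<longleftrightarrow> partition_list ps \<and> 0 < p \<and> largest_part ps \<le> p"
  unfolding partition_list_def by (cases ps) auto

lemma diagram_props:
  assumes "partition_list ps"
  shows "maya (diagram d ps) \<and> charge (diagram d ps) = d \<and>
    energy (diagram d ps) = binom2 d + int (sum_list ps) \<and>
    (\<forall>y\<in>diagram d ps. y < int (largest_part ps) + d) \<and>
    int (largest_part ps) + d - 1 \<in> diagram d ps"
  using assms
proof (induction ps arbitrary: d)
  case Nil
  then show ?case using downset_maya[of d] downset_charge_energy[of d] by simp
next
  case (Cons p ps)
  have ps: "partition_list ps" "0 < p" "largest_part ps \<le> p"
    using Cons.prems partition_list_Cons by auto
  note IH = Cons.IH[OF ps(1), of "d - 1"]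
  have "int p + d - 1 \<notin> diagram (d - 1) ps" using IH ps by fastforce
  note ins = maya_insert[OF conjunct1[OF IH] this]
  show ?case using ins IH ps binom2_succ[of "d - 1"] by auto
qed

text \<open>The largest part can be read off a diagram: it is the position of its greatest element.\<close>
lemma diagram_largest_part:
  assumes "partition_list ps" "partition_list qs" "diagram d ps = diagram d qs"
  shows "largest_part ps = largest_part qs"
proof -
  have "int (largest_part ps) + d - 1 < int (largest_part qs) + d"
    "int (largest_part qs) + d - 1 < int (largest_part ps) + d"
    using diagram_props[OF assms(1), of d] diagram_props[OF assms(2), of d] assms(3) by auto
  then show ?thesis by linarith
qed

text \<open>Peeling off greatest elements shows that the diagram determines the partition.\<close>
lemma diagram_inj:
  assumes "partition_list ps" "partition_list qs" "diagram d ps = diagram d qs"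
  shows "ps = qs"
  using assms
proof (induction ps arbitrary: qs d)
  case Nil
  then have "largest_part qs = 0" using diagram_largest_part[of "[]" qs d] by simp
  then show ?case using Nil.prems(2) by (cases qs) (auto simp: partition_list_Cons)
next
  case (Cons p ps)
  have ps: "partition_list ps" "0 < p" "largest_part ps \<le> p"
    using Cons.prems(1) partition_list_Cons by auto
  have "largest_part qs = p" using diagram_largest_part[OF Cons.prems] by simp
  with ps(2) obtain qs' where qs: "qs = p # qs'" by (cases qs) auto
  have qs': "partition_list qs'" "largest_part qs' \<le> p"
    using Cons.prems(2) qs partition_list_Cons by auto
  have "int p + d - 1 \<notin> diagram (d - 1) ps" "int p + d - 1 \<notin> diagram (d - 1) qs'"
    using diagram_props[OF ps(1), of "d - 1"] diagram_props[OF qs'(1), of "d - 1"] ps(3) qs'(2)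
    by fastforce+
  then have "diagram (d - 1) ps = diagram (d - 1) qs'"
    using Cons.prems(3) qs by (metis diagram.simps(2) Diff_insert_absorb)
  then show ?case using Cons.IH[OF ps(1) qs'(1)] qs by simp
qed

lemma maya_finite_above:
  assumes "maya M" shows "finite (M \<inter> {a..})"
proof -
  obtain hi where "M \<subseteq> {..<hi}" using assms maya_def by blast
  then have "M \<inter> {a..} \<subseteq> {a..<hi}" by auto
  then show ?thesis using finite_subset by blast
qed

lemma maya_greatest:
  assumes "maya M" obtains m where "m \<in> M" "\<And>y. y \<in> M \<Longrightarrow> y \<le> m"
proof -
  obtain lo where lo: "{..<lo} \<subseteq> M" using assms maya_def by blast
  define K where "K = M \<inter> {lo - 1..}"
  have K: "finite K" "lo - 1 \<in> K" unfolding K_def using lo maya_finite_above[OF assms] by auto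
  show ?thesis
  proof
    show "Max K \<in> M" using Max_in[OF K(1)] K(2) unfolding K_def by auto
    fix y assume "y \<in> M"
    then show "y \<le> Max K"
      using Max_ge[OF K(1)] K(2) unfolding K_def by (cases "lo - 1 \<le> y") force+
  qed
qed

text \<open>Adding a new greatest point \<open>m\<close> to the diagram of a partition gives the diagram of the
  partition with the new largest part \<open>m - d + 1\<close>, provided the result is not a down-set
  (witnessed by a gap \<open>b < m\<close>).\<close>
lemma diagram_add_greatest:
  assumes ps: "partition_list ps" and M': "M' = diagram (d - 1) ps"
    and m: "m \<notin> M'" "\<forall>y\<in>M'. y < m" and gap: "b < m" "b \<notin> M'"
  shows "partition_list (nat (m - d + 1) # ps) \<and> insert m M' = diagram d (nat (m - d + 1) # ps)"
proof -
  note props = diagram_props[OF ps, of "d - 1", folded M']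
  then have top: "int (largest_part ps) \<le> m - d + 1" using m(2) by fastforce
  have pos: "1 \<le> m - d + 1"
  proof (cases ps)
    case Nil
    then have "d - 1 \<le> b" using M' gap(2) by simp
    then show ?thesis using gap(1) by simp
  next
    case (Cons q qs)
    then show ?thesis using top ps partition_list_def by fastforce
  qed
  show ?thesis using ps top pos M' by (simp add: partition_list_Cons)
qed

text \<open>Every Maya diagram arises from a partition: remove its greatest element repeatedly
  until a down-set remains; the removed positions, shifted by the charge, are the parts.\<close>
lemma diagram_surj:
  assumes "maya M" shows "\<exists>ps. partition_list ps \<and> M = diagram (charge M) ps"
proof -
  obtain lo where "{..<lo} \<subseteq> M" using assms maya_def by blast
  with assms show ?thesis
  proof (induction "card (M \<inter> {lo..})" arbitrary: M rule: less_induct)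
    case less
    obtain m where m: "m \<in> M" "\<And>y. y \<in> M \<Longrightarrow> y \<le> m" using maya_greatest[OF less.prems(1)] by blast
    show ?case
    proof (cases "\<forall>b<m. b \<in> M")
      case True
      then have "M = {..<m + 1}" using m by force
      then show ?thesis using downset_charge_energy[of "m + 1"]
        by (intro exI[of _ "[]"]) (simp add: partition_list_def)
    next
      case False
      then obtain b where b: "b < m" "b \<notin> M" by auto
      define M' where "M' = M - {m}"
      have M: "M = insert m M'" "m \<notin> M'" using m(1) unfolding M'_def by auto
      have lo_b: "lo \<le> b" using less.prems(2) b by force
      then have lo: "{..<lo} \<subseteq> M'" using less.prems(2) b unfolding M'_def by auto
      have "maya M'" using less.prems(1) lo(1) unfolding maya_def M'_def by blast
      note ins = maya_insert[OF this M(2), folded M(1)]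
      have "card (M' \<inter> {lo..}) < card (M \<inter> {lo..})"
        using m(1) b lo_b maya_finite_above[OF less.prems(1)]
        unfolding M'_def by (intro psubset_card_mono) auto
      then obtain ps where ps: "partition_list ps" "M' = diagram (charge M') ps"
        using less.hyps \<open>maya M'\<close> lo by blast
      have "M' = diagram (charge M - 1) ps" using ps(2) ins(2) by simp
      moreover have "\<forall>y\<in>M'. y < m" "b \<notin> M'" using m M b by (metis insertCI order_le_less)+
      ultimately show ?thesis
        using diagram_add_greatest[OF ps(1) _ M(2) _ b(1)] unfolding M(1)[symmetric] by blast
    qed
  qed
qed

definition parts :: "nat multiset \<Rightarrow> nat list" where
  "parts \<nu> = rev (sorted_list_of_multiset \<nu>)"

lemma parts_partition_list: "\<nu> \<in> Ptns \<Longrightarrow> partition_list (parts \<nu>)"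
  unfolding partition_list_def parts_def Ptns_def
  by (auto simp: sorted_wrt_rev sorted_sorted_list_of_multiset)

lemma mset_parts: "mset (parts \<nu>) = \<nu>"
  unfolding parts_def by simp

lemma sum_parts: "sum_list (parts \<nu>) = psize \<nu>"
  unfolding psize_def by (metis mset_parts sum_mset_sum_list)

lemma parts_mset: assumes "partition_list ps" shows "parts (mset ps) = ps"
proof -
  have "sorted (rev ps)" using assms unfolding partition_list_def by (simp add: sorted_wrt_rev)
  then have "sorted_list_of_multiset (mset ps) = rev ps"
    by (simp add: sorted_list_of_multiset_mset properties_for_sort)
  then show ?thesis unfolding parts_def by simp
qed

definition diagram_of :: "nat multiset \<times> int \<Rightarrow> int set" where
  "diagram_of x = diagram (snd x) (parts (fst x))"

lemma diagram_of_charge_energy: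
  assumes "x \<in> Ptns \<times> UNIV"
  shows "charge (diagram_of x) = snd x" "energy (diagram_of x) = binom2 (snd x) + int (psize (fst x))"
  using diagram_props[OF parts_partition_list, of "fst x" "snd x"] assms sum_parts
  unfolding diagram_of_def by auto

lemma bij_diagram_of: "bij_betw diagram_of (Ptns \<times> UNIV) (Collect maya)"
proof (rule bij_betw_imageI)
  show "inj_on diagram_of (Ptns \<times> UNIV)"
  proof (rule inj_onI)
    fix x y assume x: "x \<in> Ptns \<times> UNIV" and y: "y \<in> Ptns \<times> UNIV"
      and eq: "diagram_of x = diagram_of y"
    then have "snd x = snd y" using diagram_of_charge_energy(1) by metis
    then have "parts (fst x) = parts (fst y)"
      using diagram_inj[OF parts_partition_list parts_partition_list] x y eq
      unfolding diagram_of_def by auto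
    then show "x = y" using \<open>snd x = snd y\<close> mset_parts by (metis prod_eq_iff)
  qed
  show "diagram_of ` (Ptns \<times> UNIV) = Collect maya"
  proof
    show "diagram_of ` (Ptns \<times> UNIV) \<subseteq> Collect maya"
      using diagram_props[OF parts_partition_list] unfolding diagram_of_def by auto
    show "Collect maya \<subseteq> diagram_of ` (Ptns \<times> UNIV)"
    proof
      fix M assume "M \<in> Collect maya"
      then obtain ps where ps: "partition_list ps" "M = diagram (charge M) ps"
        using diagram_surj by blast
      then have "M = diagram_of (mset ps, charge M)" "mset ps \<in> Ptns"
        unfolding diagram_of_def using parts_mset[OF ps(1)]
        by (auto simp: Ptns_def partition_list_def)
      then show "M \<in> diagram_of ` (Ptns \<times> UNIV)" by blast
    qed
  qed
qed

lemma bij_betw_PiE_lift: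
  assumes bij: "bij_betw \<phi> X Y"
  shows "bij_betw (\<lambda>f. \<lambda>i\<in>I. \<phi> (f i)) (I \<rightarrow>\<^sub>E X) (I \<rightarrow>\<^sub>E Y)"
proof (rule bij_betwI[where g = "\<lambda>g. \<lambda>i\<in>I. inv_into X \<phi> (g i)"])
  have "\<phi> \<in> X \<rightarrow> Y" "inv_into X \<phi> \<in> Y \<rightarrow> X"
    using bij bij_betw_imp_funcset bij_betw_inv_into by blast+
  then show "(\<lambda>f. \<lambda>i\<in>I. \<phi> (f i)) \<in> (I \<rightarrow>\<^sub>E X) \<rightarrow> (I \<rightarrow>\<^sub>E Y)"
    "(\<lambda>g. \<lambda>i\<in>I. inv_into X \<phi> (g i)) \<in> (I \<rightarrow>\<^sub>E Y) \<rightarrow> (I \<rightarrow>\<^sub>E X)" by auto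
  show "(\<lambda>i\<in>I. inv_into X \<phi> ((\<lambda>i\<in>I. \<phi> (f i)) i)) = f" if "f \<in> I \<rightarrow>\<^sub>E X" for f
    using that bij_betw_inv_into_left[OF bij] by (auto intro!: ext simp: PiE_def extensional_def Pi_iff)
  show "(\<lambda>i\<in>I. \<phi> ((\<lambda>i\<in>I. inv_into X \<phi> (g i)) i)) = g" if "g \<in> I \<rightarrow>\<^sub>E Y" for g
    using that bij_betw_inv_into_right[OF bij] by (auto intro!: ext simp: PiE_def extensional_def Pi_iff)
qed

lemma count_via_diagrams:
  "card {f \<in> {..<t} \<rightarrow>\<^sub>E (Ptns \<times> (UNIV :: int set)).
       odd (\<Sum>i<t. snd (f i)) \<and>
       (\<Sum>i<t. C i * int (psize (fst (f i)))) + (\<Sum>i<t. C i * binom2 (snd (f i)))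
         + (\<Sum>i<t. A i * snd (f i)) = N}
   = card {g \<in> {..<t} \<rightarrow>\<^sub>E Collect maya. odd (\<Sum>i<t. charge (g i)) \<and>
       (\<Sum>i<t. C i * energy (g i) + A i * charge (g i)) = N}"
proof (rule bij_betw_same_card, rule bij_betw_Collect[OF bij_betw_PiE_lift[OF bij_diagram_of]])
  fix f assume "f \<in> {..<t} \<rightarrow>\<^sub>E Ptns \<times> (UNIV :: int set)"
  then have f: "f i \<in> Ptns \<times> UNIV" if "i < t" for i using that by auto
  let ?g = "\<lambda>i\<in>{..<t}. diagram_of (f i)"
  have "(\<Sum>i<t. charge (?g i)) = (\<Sum>i<t. snd (f i))"
    by (rule sum.cong) (simp_all add: diagram_of_charge_energy f)
  moreover have "(\<Sum>i<t. C i * energy (?g i) + A i * charge (?g i)) =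
      (\<Sum>i<t. C i * int (psize (fst (f i)))) + (\<Sum>i<t. C i * binom2 (snd (f i)))
        + (\<Sum>i<t. A i * snd (f i))"
    unfolding sum.distrib[symmetric]
    by (rule sum.cong) (simp_all add: diagram_of_charge_energy f algebra_simps)
  ultimately show "(odd (\<Sum>i<t. charge (?g i)) \<and> (\<Sum>i<t. C i * energy (?g i) + A i * charge (?g i)) = N)
      \<longleftrightarrow> (odd (\<Sum>i<t. snd (f i)) \<and>
       (\<Sum>i<t. C i * int (psize (fst (f i)))) + (\<Sum>i<t. C i * binom2 (snd (f i)))
         + (\<Sum>i<t. A i * snd (f i)) = N)" by simp
qed

definition particle_sites :: "nat \<Rightarrow> (nat \<Rightarrow> int set) \<Rightarrow> (nat \<times> int) set" where
  "particle_sites t g = Sigma {..<t} (\<lambda>i. particles (g i))"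

definition hole_sites :: "nat \<Rightarrow> (nat \<Rightarrow> int set) \<Rightarrow> (nat \<times> int) set" where
  "hole_sites t g = Sigma {..<t} (\<lambda>i. holes (g i))"

definition zero_sites :: "(nat \<Rightarrow> int) \<Rightarrow> (nat \<times> int) set" where
  "zero_sites A = {(i, x). A i = 0 \<and> x = 0}"

definition pos_copies :: "nat \<Rightarrow> (nat \<Rightarrow> int) \<Rightarrow> (nat \<Rightarrow> int) \<Rightarrow> (nat \<Rightarrow> int set) \<Rightarrow> (nat \<times> bool \<times> int) set" where
  "pos_copies t C A g = (\<lambda>(i, x). (i, True, A i + C i * x)) ` (particle_sites t g - zero_sites A)"

definition neg_copies :: "nat \<Rightarrow> (nat \<Rightarrow> int) \<Rightarrow> (nat \<Rightarrow> int) \<Rightarrow> (nat \<Rightarrow> int set) \<Rightarrow> (nat \<times> bool \<times> int) set" where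
  "neg_copies t C A g = (\<lambda>(i, h). (i, False, - A i - C i * h)) ` hole_sites t g"

definition zero_flags :: "nat \<Rightarrow> (nat \<Rightarrow> int) \<Rightarrow> (nat \<Rightarrow> int set) \<Rightarrow> nat set" where
  "zero_flags t A g = {i. i < t \<and> A i = 0 \<and> 0 \<in> g i}"

definition encode :: "nat \<Rightarrow> (nat \<Rightarrow> int) \<Rightarrow> (nat \<Rightarrow> int) \<Rightarrow> (nat \<Rightarrow> int set) \<Rightarrow> (nat \<times> bool \<times> int) set \<times> nat set" where
  "encode t C A g = (pos_copies t C A g \<union> neg_copies t C A g, zero_flags t A g)"

definition decode :: "nat \<Rightarrow> (nat \<Rightarrow> int) \<Rightarrow> (nat \<Rightarrow> int) \<Rightarrow> (nat \<times> bool \<times> int) set \<times> nat set \<Rightarrow> nat \<Rightarrow> int set" where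
  "decode t C A UF = (\<lambda>i\<in>{..<t}.
      {x. 0 \<le> x \<and> ((i, True, A i + C i * x) \<in> fst UF \<or> (x = 0 \<and> i \<in> snd UF))}
    \<union> {h. h < 0 \<and> (i, False, - A i - C i * h) \<notin> fst UF})"

lemma sites_finite:
  assumes "g \<in> {..<t} \<rightarrow>\<^sub>E Collect maya"
  shows "finite (particle_sites t g)" "finite (hole_sites t g)"
  using assms unfolding particle_sites_def hole_sites_def
  by (auto intro!: finite_SigmaI simp: maya_finite PiE_def Pi_def)

definition flagged_partitions :: "nat \<Rightarrow> (nat \<Rightarrow> int) \<Rightarrow> (nat \<Rightarrow> int) \<Rightarrow> int \<Rightarrow> ((nat \<times> bool \<times> int) set \<times> nat set) set" where
  "flagged_partitions t C A N = {(U, F). finite U \<and> U \<subseteq> S_elems t C A \<and> (\<Sum>(i, s, m)\<in>U. m) = N \<and>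
      F \<subseteq> {i. i < t \<and> A i = 0} \<and> odd (card U + card F)}"

text \<open>The hypotheses on the residue classes that the encoding needs: \<open>C\<^sub>i \<ge> 1\<close> and
  \<open>0 \<le> A\<^sub>i < C\<^sub>i\<close> (the theorem assumes the stronger \<open>A\<^sub>i \<le> C\<^sub>i / 2\<close>).\<close>
locale residue_system =
  fixes t :: nat and C A :: "nat \<Rightarrow> int"
  assumes C_pos: "\<And>i. i < t \<Longrightarrow> 1 \<le> C i"
    and A_range: "\<And>i. i < t \<Longrightarrow> 0 \<le> A i \<and> A i < C i"
begin

lemma mem_pos_copies:
  "(i, True, v) \<in> pos_copies t C A g \<longleftrightarrow>
    i < t \<and> (\<exists>x\<in>particles (g i). \<not> (A i = 0 \<and> x = 0) \<and> v = A i + C i * x)"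
  unfolding pos_copies_def particle_sites_def zero_sites_def by force

lemma mem_neg_copies:
  "(i, False, v) \<in> neg_copies t C A g \<longleftrightarrow> i < t \<and> (\<exists>h\<in>holes (g i). v = - A i - C i * h)"
  unfolding neg_copies_def hole_sites_def by force

lemma copies_signs: "(i, False, v) \<notin> pos_copies t C A g" "(i, True, v) \<notin> neg_copies t C A g"
  unfolding pos_copies_def neg_copies_def by auto

lemma pos_copy_positive:
  assumes "i < t" "0 \<le> x" "\<not> (A i = 0 \<and> x = 0)" shows "0 < A i + C i * x"
proof (cases "x = 0")
  case False
  then have "C i * 1 \<le> C i * x" using assms C_pos[OF assms(1)] by (intro mult_left_mono) auto
  then show ?thesis using A_range[OF assms(1)] by linarith
qed (use assms A_range in force)

lemma neg_copy_positive:
  assumes "i < t" "h < 0" shows "0 < - A i - C i * h"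
proof -
  have "C i * 1 \<le> C i * (- h)" using assms C_pos[OF assms(1)] by (intro mult_left_mono) auto
  then show ?thesis using A_range[OF assms(1)] by simp
qed

lemma pos_class_param:
  assumes "i < t" "0 < m" "[m = A i] (mod C i)"
  obtains x where "0 \<le> x" "m = A i + C i * x"
proof -
  obtain x where x: "m - A i = C i * x" using assms(3) by (auto simp: cong_iff_dvd_diff elim: dvdE)
  have "0 \<le> x"
  proof (rule ccontr)
    assume "\<not> 0 \<le> x"
    then have "C i * x \<le> C i * (- 1)" using C_pos[OF assms(1)] by (intro mult_left_mono) auto
    then show False using x assms(2) A_range[OF assms(1)] by simp
  qed
  then show ?thesis using that x by simp
qed

lemma neg_class_param:
  assumes "i < t" "0 < m" "[m = - A i] (mod C i)"
  obtains h where "h < 0" "m = - A i - C i * h"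
proof -
  obtain k where k: "m + A i = C i * k" using assms(3) by (auto simp: cong_iff_dvd_diff elim: dvdE)
  have "0 < C i * k" using k assms(2) A_range[OF assms(1)] by linarith
  then have "0 < k" using C_pos[OF assms(1)] by (simp add: zero_less_mult_iff)
  then show ?thesis using that[of "- k"] k by simp
qed

lemma encode_target:
  assumes g: "g \<in> {..<t} \<rightarrow>\<^sub>E Collect maya"
  shows "encode t C A g \<in> {(U, F). finite U \<and> U \<subseteq> S_elems t C A \<and> F \<subseteq> {i. i < t \<and> A i = 0}}"
proof -
  have "finite (pos_copies t C A g \<union> neg_copies t C A g)"
    unfolding pos_copies_def neg_copies_def using sites_finite[OF g] by simp
  moreover have "pos_copies t C A g \<subseteq> S_elems t C A"
    unfolding pos_copies_def particle_sites_def zero_sites_def particles_def S_elems_def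
    by (auto simp: cong_iff_dvd_diff pos_copy_positive)
  moreover have "neg_copies t C A g \<subseteq> S_elems t C A"
    unfolding neg_copies_def hole_sites_def holes_def S_elems_def
    using neg_copy_positive by (fastforce simp: cong_iff_dvd_diff)
  moreover have "zero_flags t A g \<subseteq> {i. i < t \<and> A i = 0}" unfolding zero_flags_def by auto
  ultimately show ?thesis unfolding encode_def by simp
qed

lemma decode_maya:
  assumes U: "finite U" and i: "i < t"
  shows "maya (decode t C A (U, F) i)"
proof -
  define B where "B = Max (insert 0 ((\<lambda>u. snd (snd u)) ` U))"
  have B: "\<And>u. u \<in> U \<Longrightarrow> snd (snd u) \<le> B" "0 \<le> B"
    unfolding B_def using U by auto
  have "{..<- B} \<subseteq> decode t C A (U, F) i"
  proof
    fix h assume "h \<in> {..<- B}"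
    then have "B + 1 \<le> - h" by simp
    then have "C i * (B + 1) \<le> C i * (- h)" using C_pos[OF i] by (intro mult_left_mono) auto
    moreover have "B \<le> C i * B" using C_pos[OF i] B(2) by (simp add: mult_le_cancel_right1)
    ultimately have "B < - A i - C i * h" using A_range[OF i] by (simp add: algebra_simps)
    then show "h \<in> decode t C A (U, F) i"
      using B(1) \<open>h \<in> {..<- B}\<close> B(2) i unfolding decode_def by force
  qed
  moreover have "decode t C A (U, F) i \<subseteq> {..<B + 1}"
  proof
    fix x assume x: "x \<in> decode t C A (U, F) i"
    show "x \<in> {..<B + 1}"
    proof (rule ccontr)
      assume "x \<notin> {..<B + 1}"
      then have "B < x" "x \<le> C i * x" using C_pos[OF i] B(2) by (auto simp: mult_le_cancel_right1)
      then have "B < A i + C i * x" using A_range[OF i] by simp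
      then show False using x B \<open>B < x\<close> i unfolding decode_def by force
    qed
  qed
  ultimately show ?thesis unfolding maya_def by blast
qed

lemma decode_encode:
  assumes g: "g \<in> {..<t} \<rightarrow>\<^sub>E Collect maya"
  shows "decode t C A (encode t C A g) = g"
proof
  fix i show "decode t C A (encode t C A g) i = g i"
  proof (cases "i < t")
    case False
    then show ?thesis using g unfolding decode_def by (auto simp: PiE_def extensional_def)
  next
    case True
    have cancel: "C i * x = C i * y \<longleftrightarrow> x = y" for x y using C_pos[OF True] by auto
    show ?thesis
    proof (rule set_eqI)
      fix y show "y \<in> decode t C A (encode t C A g) i \<longleftrightarrow> y \<in> g i"
      proof (cases "0 \<le> y")
        case nonneg: True
        have "(i, True, A i + C i * y) \<in> pos_copies t C A g \<longleftrightarrow>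
            y \<in> particles (g i) \<and> \<not> (A i = 0 \<and> y = 0)"
          unfolding mem_pos_copies using True cancel by auto
        then show ?thesis unfolding decode_def encode_def zero_flags_def
          using True nonneg copies_signs by (auto simp: particles_def)
      next
        case False
        have "(i, False, - A i - C i * y) \<in> neg_copies t C A g \<longleftrightarrow> y \<in> holes (g i)"
          unfolding mem_neg_copies using True cancel by auto
        then show ?thesis unfolding decode_def encode_def
          using True False copies_signs by (auto simp: holes_def)
      qed
    qed
  qed
qed

lemma encode_decode:
  assumes U: "U \<subseteq> S_elems t C A" and F: "F \<subseteq> {i. i < t \<and> A i = 0}"
  shows "encode t C A (decode t C A (U, F)) = (U, F)"
proof -
  define g where "g = decode t C A (U, F)"
  have "pos_copies t C A g \<union> neg_copies t C A g \<subseteq> U"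
  proof
    fix u assume "u \<in> pos_copies t C A g \<union> neg_copies t C A g"
    then show "u \<in> U"
      using F unfolding pos_copies_def neg_copies_def particle_sites_def hole_sites_def
        zero_sites_def g_def decode_def particles_def holes_def by auto
  qed
  moreover have "U \<subseteq> pos_copies t C A g \<union> neg_copies t C A g"
  proof
    fix u assume uU: "u \<in> U"
    then obtain i s m where u: "u = (i, s, m)" "i < t" "0 < m"
      "if s then [m = A i] (mod C i) else [m = - A i] (mod C i)"
      using U unfolding S_elems_def by auto
    show "u \<in> pos_copies t C A g \<union> neg_copies t C A g"
    proof (cases s)
      case True
      then obtain x where x: "0 \<le> x" "m = A i + C i * x" using pos_class_param u by metis
      then have "x \<in> particles (g i)" "\<not> (A i = 0 \<and> x = 0)"
        using uU u True unfolding g_def decode_def particles_def by auto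
      then show ?thesis using u True x by (auto simp: mem_pos_copies)
    next
      case False
      then obtain h where h: "h < 0" "m = - A i - C i * h" using neg_class_param u by metis
      then have "h \<in> holes (g i)" using uU u False unfolding g_def decode_def holes_def by auto
      then show ?thesis using u False h by (auto simp: mem_neg_copies)
    qed
  qed
  moreover have "zero_flags t A g = F"
  proof
    show "F \<subseteq> zero_flags t A g" using F unfolding zero_flags_def g_def decode_def by auto
    have "(i, True, 0) \<notin> U" for i using U unfolding S_elems_def by auto
    then show "zero_flags t A g \<subseteq> F" unfolding zero_flags_def g_def decode_def by auto
  qed
  ultimately show ?thesis unfolding encode_def g_def by auto
qed

lemma bij_encode:
  "bij_betw (encode t C A) ({..<t} \<rightarrow>\<^sub>E Collect maya)
     {(U, F). finite U \<and> U \<subseteq> S_elems t C A \<and> F \<subseteq> {i. i < t \<and> A i = 0}}"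
proof (rule bij_betwI[where g = "decode t C A"])
  show "encode t C A \<in> ({..<t} \<rightarrow>\<^sub>E Collect maya) \<rightarrow>
      {(U, F). finite U \<and> U \<subseteq> S_elems t C A \<and> F \<subseteq> {i. i < t \<and> A i = 0}}"
    using encode_target by (rule Pi_I)
  show "decode t C A \<in> {(U, F). finite U \<and> U \<subseteq> S_elems t C A \<and> F \<subseteq> {i. i < t \<and> A i = 0}}
      \<rightarrow> ({..<t} \<rightarrow>\<^sub>E Collect maya)"
    using decode_maya by (auto simp: decode_def)
  show "decode t C A (encode t C A g) = g" if "g \<in> {..<t} \<rightarrow>\<^sub>E Collect maya" for g
    using decode_encode[OF that] .
  show "encode t C A (decode t C A p) = p"
    if "p \<in> {(U, F). finite U \<and> U \<subseteq> S_elems t C A \<and> F \<subseteq> {i. i < t \<and> A i = 0}}" for p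
    using that encode_decode by (cases p) simp
qed

lemma inj_pos_copy: "inj_on (\<lambda>(i, x). (i, True, A i + C i * x)) (particle_sites t g - zero_sites A)"
  unfolding inj_on_def particle_sites_def using C_pos by fastforce

lemma inj_neg_copy: "inj_on (\<lambda>(i, h). (i, False, - A i - C i * h)) (hole_sites t g)"
  unfolding inj_on_def hole_sites_def using C_pos by fastforce

text \<open>The total value of the encoded elements of \<open>S\<close> is \<open>\<Sum> C\<^sub>i energy + A\<^sub>i charge\<close>:
  a particle at \<open>x\<close> contributes \<open>A\<^sub>i + C\<^sub>i x\<close>, a hole at \<open>h\<close> contributes \<open>-A\<^sub>i - C\<^sub>i h\<close>,
  and the omitted particles at \<open>0\<close> (when \<open>A\<^sub>i = 0\<close>) contribute nothing.\<close>
lemma encode_weight: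
  assumes g: "g \<in> {..<t} \<rightarrow>\<^sub>E Collect maya"
  shows "(\<Sum>(i, s, m)\<in>fst (encode t C A g). m) = (\<Sum>i<t. C i * energy (g i) + A i * charge (g i))"
proof -
  have gi: "\<And>i. i < t \<Longrightarrow> maya (g i)" using g by (auto simp: PiE_def Pi_def)
  have "(\<Sum>(i, s, m)\<in>pos_copies t C A g. m) = (\<Sum>(i, x)\<in>particle_sites t g - zero_sites A. A i + C i * x)"
    unfolding pos_copies_def by (subst sum.reindex[OF inj_pos_copy]) (simp add: case_prod_beta o_def)
  also have "\<dots> = (\<Sum>(i, x)\<in>particle_sites t g. A i + C i * x)"
    by (rule sum.mono_neutral_left) (auto simp: sites_finite[OF g] zero_sites_def)
  also have "\<dots> = (\<Sum>i<t. \<Sum>x\<in>particles (g i). A i + C i * x)"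
    unfolding particle_sites_def by (rule sum.Sigma[symmetric]) (auto simp: maya_finite gi)
  also have "\<dots> = (\<Sum>i<t. A i * int (card (particles (g i))) + C i * (\<Sum>x\<in>particles (g i). x))"
    by (simp add: sum.distrib sum_distrib_left ac_simps)
  finally have pos: "(\<Sum>(i, s, m)\<in>pos_copies t C A g. m) = \<dots>" .
  have "(\<Sum>(i, s, m)\<in>neg_copies t C A g. m) = (\<Sum>(i, h)\<in>hole_sites t g. - A i - C i * h)"
    unfolding neg_copies_def by (subst sum.reindex[OF inj_neg_copy]) (simp add: case_prod_beta o_def)
  also have "\<dots> = (\<Sum>i<t. \<Sum>h\<in>holes (g i). - A i - C i * h)"
    unfolding hole_sites_def by (rule sum.Sigma[symmetric]) (auto simp: maya_finite gi)
  also have "\<dots> = (\<Sum>i<t. - A i * int (card (holes (g i))) + C i * (\<Sum>h\<in>holes (g i). - h))"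
    by (simp add: sum_subtractf sum_distrib_left sum_negf ac_simps)
  finally have neg: "(\<Sum>(i, s, m)\<in>neg_copies t C A g. m) = \<dots>" .
  have "(\<Sum>(i, s, m)\<in>fst (encode t C A g). m) =
      (\<Sum>(i, s, m)\<in>pos_copies t C A g. m) + (\<Sum>(i, s, m)\<in>neg_copies t C A g. m)"
    unfolding encode_def fst_conv pos_copies_def neg_copies_def
    by (rule sum.union_disjoint) (auto simp: sites_finite[OF g])
  also have "\<dots> = (\<Sum>i<t. C i * energy (g i) + A i * charge (g i))"
    unfolding pos neg sum.distrib[symmetric]
    by (rule sum.cong) (auto simp: energy_def charge_def algebra_simps)
  finally show ?thesis .
qed

text \<open>Every particle and every hole is recorded exactly once, either as an element of \<open>S\<close> or
  as a zero flag, so the total number of records has the parity of the total charge.\<close>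
lemma encode_parity:
  assumes g: "g \<in> {..<t} \<rightarrow>\<^sub>E Collect maya"
  shows "odd (card (fst (encode t C A g)) + card (snd (encode t C A g))) \<longleftrightarrow> odd (\<Sum>i<t. charge (g i))"
proof -
  have gi: "\<And>i. i < t \<Longrightarrow> maya (g i)" using g by (auto simp: PiE_def Pi_def)
  let ?P = "particle_sites t g" and ?H = "hole_sites t g" and ?Z = "zero_sites A"
  have fin: "finite ?P" "finite ?H" using sites_finite[OF g] .
  have "card (pos_copies t C A g) = card (?P - ?Z)"
    unfolding pos_copies_def by (rule card_image[OF inj_pos_copy])
  moreover have "card (neg_copies t C A g) = card ?H"
    unfolding neg_copies_def by (rule card_image[OF inj_neg_copy])
  moreover have "pos_copies t C A g \<inter> neg_copies t C A g = {}"
    unfolding pos_copies_def neg_copies_def by auto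
  moreover have "finite (pos_copies t C A g)" "finite (neg_copies t C A g)"
    unfolding pos_copies_def neg_copies_def using fin by auto
  ultimately have card_U: "card (fst (encode t C A g)) = card (?P - ?Z) + card ?H"
    unfolding encode_def fst_conv by (simp add: card_Un_disjoint)
  have "zero_flags t A g = fst ` (?P \<inter> ?Z)"
    unfolding zero_flags_def particle_sites_def zero_sites_def particles_def by force
  moreover have "inj_on fst (?P \<inter> ?Z)" unfolding inj_on_def zero_sites_def by auto
  ultimately have card_F: "card (snd (encode t C A g)) = card (?P \<inter> ?Z)"
    unfolding encode_def by (simp add: card_image)
  have "card ?P = card ((?P - ?Z) \<union> (?P \<inter> ?Z))" by (simp add: Un_Diff_Int)
  also have "\<dots> = card (?P - ?Z) + card (?P \<inter> ?Z)" using fin(1) by (intro card_Un_disjoint) auto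
  finally have card_P: "card ?P = card (?P - ?Z) + card (?P \<inter> ?Z)" .
  have "card ?P = (\<Sum>i<t. card (particles (g i)))" "card ?H = (\<Sum>i<t. card (holes (g i)))"
    unfolding particle_sites_def hole_sites_def by (auto intro!: card_SigmaI simp: maya_finite gi)
  then have "card (fst (encode t C A g)) + card (snd (encode t C A g)) =
      (\<Sum>i<t. card (particles (g i))) + (\<Sum>i<t. card (holes (g i)))"
    using card_U card_F card_P by simp
  then have "int (card (fst (encode t C A g)) + card (snd (encode t C A g))) =
      (\<Sum>i<t. int (card (particles (g i)))) + (\<Sum>i<t. int (card (holes (g i))))"
    by (simp only: of_nat_add of_nat_sum)
  also have "\<dots> = (\<Sum>i<t. charge (g i)) + 2 * (\<Sum>i<t. int (card (holes (g i))))"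
    by (simp add: charge_def sum_subtractf sum.distrib)
  finally have "int (card (fst (encode t C A g)) + card (snd (encode t C A g))) =
      (\<Sum>i<t. charge (g i)) + 2 * (\<Sum>i<t. int (card (holes (g i))))" .
  then have "odd (int (card (fst (encode t C A g)) + card (snd (encode t C A g)))) \<longleftrightarrow>
      odd (\<Sum>i<t. charge (g i))"
    by (simp only:) simp
  then show ?thesis by (simp only: even_of_nat)
qed

lemma count_via_subsets:
  "card {g \<in> {..<t} \<rightarrow>\<^sub>E Collect maya. odd (\<Sum>i<t. charge (g i)) \<and>
       (\<Sum>i<t. C i * energy (g i) + A i * charge (g i)) = N}
   = card (flagged_partitions t C A N)"
proof -
  have "flagged_partitions t C A N =
      {p \<in> {(U, F). finite U \<and> U \<subseteq> S_elems t C A \<and> F \<subseteq> {i. i < t \<and> A i = 0}}.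
        odd (card (fst p) + card (snd p)) \<and> (\<Sum>(i, s, m)\<in>fst p. m) = N}"
    unfolding flagged_partitions_def by auto
  moreover have "bij_betw (encode t C A)
      {g \<in> {..<t} \<rightarrow>\<^sub>E Collect maya. odd (\<Sum>i<t. charge (g i)) \<and>
        (\<Sum>i<t. C i * energy (g i) + A i * charge (g i)) = N} \<dots>"
    by (rule bij_betw_Collect[OF bij_encode]) (simp only: encode_weight encode_parity)
  ultimately show ?thesis by (simp add: bij_betw_same_card)
qed

end

lemma card_subsets_parity:
  assumes "finite Z" "Z \<noteq> {}"
  shows "card {F. F \<subseteq> Z \<and> odd (k + card F)} = 2 ^ (card Z - 1)"
proof -
  let ?E = "{F. F \<subseteq> Z \<and> even (card F)}" and ?O = "{F. F \<subseteq> Z \<and> odd (card F)}"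
  have "card ?E = card ?O" using card_subsupersets_even_odd[of Z "{}"] assms by auto
  moreover have "card ?E + card ?O = 2 ^ card Z"
  proof -
    have "Pow Z = ?E \<union> ?O" "?E \<inter> ?O = {}" by auto
    then show ?thesis using card_Pow[of Z] card_Un_disjoint[of ?E ?O] assms(1) by simp
  qed
  moreover have "2 ^ card Z = 2 * (2::nat) ^ (card Z - 1)"
    using assms by (simp add: card_gt_0_iff flip: power_Suc)
  moreover have "{F. F \<subseteq> Z \<and> odd (k + card F)} = (if even k then ?O else ?E)" by auto
  ultimately show ?thesis by simp
qed

text \<open>Partitions of \<open>N\<close> into distinct elements of \<open>S\<close> form a finite set, since every element
  used lies in \<open>{1..N}\<close>.\<close>
lemma finite_S_partitions:
  "finite {X. finite X \<and> X \<subseteq> S_elems t C A \<and> (\<Sum>(i, s, m)\<in>X. m) = N}"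
proof (rule finite_subset)
  show "finite (Pow ({..<t} \<times> (UNIV :: bool set) \<times> {1..N}))" by simp
  show "{X. finite X \<and> X \<subseteq> S_elems t C A \<and> (\<Sum>(i, s, m)\<in>X. m) = N}
      \<subseteq> Pow ({..<t} \<times> (UNIV :: bool set) \<times> {1..N})"
  proof (intro subsetI PowI)
    fix X u assume "X \<in> {X. finite X \<and> X \<subseteq> S_elems t C A \<and> (\<Sum>(i, s, m)\<in>X. m) = N}" and u: "u \<in> X"
    then have X: "finite X" "X \<subseteq> S_elems t C A" "(\<Sum>(i, s, m)\<in>X. m) = N" by auto
    have pos: "0 < snd (snd v) \<and> fst v < t" if "v \<in> X" for v
      using X(2) that unfolding S_elems_def by auto
    have "snd (snd u) \<le> (\<Sum>v\<in>X. snd (snd v))"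
      by (rule member_le_sum) (use u X pos in \<open>auto simp: less_imp_le\<close>)
    also have "\<dots> = N" using X(3) by (simp add: case_prod_beta)
    finally show "u \<in> {..<t} \<times> (UNIV :: bool set) \<times> {1..N}" using pos[OF u] by (cases u) auto
  qed
qed

lemma count_flagged_partitions:
  "card (flagged_partitions t C A N) = 2 ^ (max (card {i. i < t \<and> A i = 0}) 1 - 1) * D_S t C A N"
proof -
  let ?Z = "{i. i < t \<and> A i = 0}"
  let ?W = "{X. finite X \<and> X \<subseteq> S_elems t C A \<and> (\<Sum>(i, s, m)\<in>X. m) = N}"
  show ?thesis
  proof (cases "?Z = {}")
    case True
    have "flagged_partitions t C A N = {(U, F). U \<in> ?W \<and> odd (card U) \<and> F = {}}"
      unfolding flagged_partitions_def True by auto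
    also have "\<dots> = (\<lambda>U. (U, {})) ` {X \<in> ?W. odd (card X)}" by auto
    finally have "flagged_partitions t C A N = (\<lambda>U. (U, {})) ` {X \<in> ?W. odd (card X)}" .
    moreover have "D_S t C A N = card {X \<in> ?W. odd (card X)}"
      using True unfolding D_S_def by (simp add: conj_assoc)
    ultimately show ?thesis using True by (simp add: card_image inj_on_def)
  next
    case False
    then have some_zero: "(\<forall>i<t. A i \<noteq> 0) = False" by auto
    have "D_S t C A N = card ?W" unfolding D_S_def some_zero by simp
    have "flagged_partitions t C A N = Sigma ?W (\<lambda>U. {F. F \<subseteq> ?Z \<and> odd (card U + card F)})"
      unfolding flagged_partitions_def by auto
    then have "card (flagged_partitions t C A N) = (\<Sum>U\<in>?W. card {F. F \<subseteq> ?Z \<and> odd (card U + card F)})"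
      using finite_S_partitions by (simp add: card_SigmaI)
    also have "\<dots> = (\<Sum>U\<in>?W. 2 ^ (card ?Z - 1))"
      using card_subsets_parity[of ?Z] False by simp
    also have "\<dots> = 2 ^ (card ?Z - 1) * card ?W" by simp
    finally have "card (flagged_partitions t C A N) = 2 ^ (card ?Z - 1) * D_S t C A N"
      using \<open>D_S t C A N = card ?W\<close> by simp
    moreover have "max (card ?Z) 1 - 1 = card ?Z - 1" using False by (simp add: card_gt_0_iff Suc_leI)
    ultimately show ?thesis by simp
  qed
qed

text \<open>The main theorem chains the three steps.\<close>
theorem lemma2p2:
  fixes t :: nat and C A :: "nat \<Rightarrow> int" and N :: int
  assumes "t \<ge> 1"
    and "\<And>i. i < t \<Longrightarrow> C i \<ge> 1"
    and "\<And>i. i < t \<Longrightarrow> 0 \<le> A i \<and> 2 * A i \<le> C i"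
    and "N \<ge> 1"
  shows "2 ^ (max (card {i. i < t \<and> A i = 0}) 1 - 1) * D_S t C A N =
    card {f \<in> {..<t} \<rightarrow>\<^sub>E (Ptns \<times> (UNIV :: int set)).
       odd (\<Sum>i<t. snd (f i)) \<and>
       (\<Sum>i<t. C i * int (psize (fst (f i)))) + (\<Sum>i<t. C i * binom2 (snd (f i)))
         + (\<Sum>i<t. A i * snd (f i)) = N}"
proof -
  interpret residue_system t C A using assms(2,3) by unfold_locales force+
  have "card {f \<in> {..<t} \<rightarrow>\<^sub>E (Ptns \<times> (UNIV :: int set)).
       odd (\<Sum>i<t. snd (f i)) \<and>
       (\<Sum>i<t. C i * int (psize (fst (f i)))) + (\<Sum>i<t. C i * binom2 (snd (f i)))
         + (\<Sum>i<t. A i * snd (f i)) = N}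
    = card (flagged_partitions t C A N)"
    unfolding count_via_diagrams count_via_subsets ..
  then show ?thesis using count_flagged_partitions by simp
qed

end
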